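(* Let $(X,d_X)$ and $(Y,d_Y)$ be compact metric spaces and equip $X\times Y$ with the metric $d((x,y),(x',y'))=d_X(x,x')+d_Y(y,y')$. Let $T:X\times Y\to X\times Y$ be an isometry (onto) such that $\alpha_T(C(X)\otimes1_Y)\subseteq C(X)\otimes1_Y$, where $\alpha_T:C(X\times Y)\to C(X\times Y)$, $\alpha_T(F)=F\circ T$. Then $T$ is a product isometry: there are isometries $h$ of $X$ and $k$ of $Y$ with $T(x,y)=(h(x),k(y))$ for all $(x,y)$. In particular the group of such isometries equals $\mathrm{ISO}(X)\times\mathrm{ISO}(Y)$. *)

theory Defs
  imports "HOL-Analysis.Analysis"
begin

definition sum_dist :: "('a \<Rightarrow> 'a \<Rightarrow> real) \<Rightarrow> ('b \<Rightarrow> 'b \<Rightarrow> real)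
    \<Rightarrow> ('a \<times> 'b) \<Rightarrow> ('a \<times> 'b) \<Rightarrow> real" where
  "sum_dist dX dY p q = dX (fst p) (fst q) + dY (snd p) (snd q)"

definition isometry_onto :: "'a set \<Rightarrow> ('a \<Rightarrow> 'a \<Rightarrow> real) \<Rightarrow> 'b set \<Rightarrow> ('b \<Rightarrow> 'b \<Rightarrow> real)
    \<Rightarrow> ('a \<Rightarrow> 'b) \<Rightarrow> bool" where
  "isometry_onto M d M' d' f \<longleftrightarrow>
     f ` M = M' \<and> (\<forall>x\<in>M. \<forall>y\<in>M. d' (f x) (f y) = d x y)"

text \<open>alpha_T (C(X) \<otimes> 1_Y) \<subseteq> C(X) \<otimes> 1_Y, with complex-valued continuous functions.\<close>
definition preserves_CX :: "'a set \<Rightarrow> ('a \<Rightarrow> 'a \<Rightarrow> real) \<Rightarrow> 'b set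
    \<Rightarrow> ('a \<times> 'b \<Rightarrow> 'a \<times> 'b) \<Rightarrow> bool" where
  "preserves_CX X dX Y T \<longleftrightarrow>
     (\<forall>f :: 'a \<Rightarrow> complex. continuous_map (Metric_space.mtopology X dX) euclidean f \<longrightarrow>
        (\<exists>g :: 'a \<Rightarrow> complex. continuous_map (Metric_space.mtopology X dX) euclidean g \<and>
           (\<forall>x\<in>X. \<forall>y\<in>Y. f (fst (T (x, y))) = g x)))"

end

theory Submission
  imports Defs
begin

(* If precomposition with T maps C(X) \<otimes> 1 into itself, then for fixed x the first coordinate
   of T(x,y) does not depend on y: composing with the continuous function dX(a,-), a the first
   coordinate of T(x,y), separates any two distinct candidates.  So T(x,y) = (h x, K x y).
   Comparing distances between points with the same first coordinate shows that every K x
   is a distance-preserving self-map of Y, hence (Y being compact) onto.  Choosing y' with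
   K x' y' = K x y, the distance identity at (x,y),(x',y') and (x,y),(x',y) forces y' = y,
   i.e. K x does not depend on x, and h is an isometry.  The converse is immediate because
   f \<circ> h is continuous whenever f is. *)

context Metric_space
begin

lemma isometry_continuous_map:
  assumes maps: "\<And>y. y \<in> M \<Longrightarrow> f y \<in> M"
    and iso: "\<And>a b. a \<in> M \<Longrightarrow> b \<in> M \<Longrightarrow> d (f a) (f b) = d a b"
  shows "continuous_map mtopology mtopology f"
  unfolding metric_continuous_map[OF Metric_space_axioms] using maps iso by fastforce

text \<open>Two iterates \<open>f\<^sup>m b\<close>, \<open>f\<^sup>m\<^sup>+\<^sup>k b\<close> of a Cauchy subsequence of the
  orbit are close, and their distance equals \<open>d b (f\<^sup>k b)\<close>.\<close>

lemma isometry_image_dense: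
  assumes compact: "compact_space mtopology" and b: "b \<in> M" and e: "e > 0"
    and maps: "\<And>y. y \<in> M \<Longrightarrow> f y \<in> M"
    and iso: "\<And>a b. a \<in> M \<Longrightarrow> b \<in> M \<Longrightarrow> d (f a) (f b) = d a b"
  shows "\<exists>y\<in>M. d b (f y) < e"
proof -
  define s where "s n = (f ^^ n) b" for n
  have s_in: "s n \<in> M" for n
    by (induction n) (auto simp: s_def maps b)
  have s_shift: "d (s m) (s (m + k)) = d b (s k)" for m k
  proof (induction m)
    case (Suc m)
    have "d (s (Suc m)) (s (Suc m + k)) = d (f (s m)) (f (s (m + k)))"
      by (simp add: s_def)
    also have "\<dots> = d (s m) (s (m + k))"
      using iso s_in by blast
    finally show ?case using Suc by simp
  qed (simp add: s_def)
  have "mtotally_bounded M"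
    using compact compact_space_eq_mcomplete_mtotally_bounded by blast
  moreover have "range s \<subseteq> M"
    using s_in by blast
  ultimately obtain r where r: "strict_mono r" "MCauchy (s \<circ> r)"
    unfolding mtotally_bounded_sequentially by blast
  then obtain N where N: "\<forall>n n'. N \<le> n \<longrightarrow> N \<le> n' \<longrightarrow> d ((s \<circ> r) n) ((s \<circ> r) n') < e"
    using e unfolding MCauchy_def by blast
  have "r N < r (Suc N)"
    using r(1) by (simp add: strict_mono_def)
  then obtain k where k: "r (Suc N) = r N + Suc k"
    using less_iff_Suc_add by auto
  have "d (s (r N)) (s (r (Suc N))) < e"
    using N by simp
  then have "d b (s (Suc k)) < e"
    using s_shift[of "r N" "Suc k"] k by simp
  moreover have "s (Suc k) = f (s k)"
    by (simp add: s_def)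
  ultimately show ?thesis
    using s_in[of k] by auto
qed

text \<open>Hence a distance-preserving self-map of a compact metric space is onto: its image is
  compact, thus closed, and dense by the previous lemma.\<close>

lemma isometry_self_map_onto:
  assumes compact: "compact_space mtopology"
    and maps: "\<And>y. y \<in> M \<Longrightarrow> f y \<in> M"
    and iso: "\<And>a b. a \<in> M \<Longrightarrow> b \<in> M \<Longrightarrow> d (f a) (f b) = d a b"
  shows "f ` M = M"
proof -
  have "compactin mtopology (f ` M)"
    using image_compactin[OF _ isometry_continuous_map[OF maps iso]] compact
    by (simp add: compact_space_def)
  then have closed: "mtopology closure_of (f ` M) = f ` M"
    by (simp add: Hausdorff_space_mtopology closure_of_closedin compactin_imp_closedin)
  have "M \<subseteq> mtopology closure_of (f ` M)"
    unfolding metric_closure_of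
    using isometry_image_dense[OF compact _ _ maps iso] maps by fastforce
  then show ?thesis
    using closed maps by blast
qed

lemma continuous_map_dist_from:
  assumes a: "a \<in> M"
  shows "continuous_map mtopology euclidean (\<lambda>z. complex_of_real (d a z))"
  unfolding metric_continuous_map[OF Met_TC.Metric_space_axioms, simplified]
proof (intro allI impI ballI)
  fix u e assume u: "u \<in> M" and e: "(e::real) > 0"
  have "dist (complex_of_real (d a u)) (complex_of_real (d a z)) \<le> d u z" if "z \<in> M" for z
    using triangle[OF a u that] triangle[OF a that u] commute[of u z]
    by (simp add: dist_norm abs_le_iff flip: of_real_diff)
  then show "\<exists>\<delta>>0. \<forall>z. z \<in> M \<and> d u z < \<delta> \<longrightarrow>
      dist (complex_of_real (d a u)) (complex_of_real (d a z)) < e"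
    using e by (meson le_less_trans)
qed

lemma continuous_functions_separate_points:
  assumes "a \<in> M" "b \<in> M"
    and same: "\<And>f :: 'a \<Rightarrow> complex. continuous_map mtopology euclidean f \<Longrightarrow> f a = f b"
  shows "a = b"
  using same[OF continuous_map_dist_from[OF \<open>a \<in> M\<close>]] assms(1,2) by simp

end

lemma preserves_CX_fst_independent:
  assumes "Metric_space X dX" and "preserves_CX X dX Y T"
    and maps: "T ` (X \<times> Y) \<subseteq> X \<times> Y"
    and "x \<in> X" "y \<in> Y" "y' \<in> Y"
  shows "fst (T (x, y)) = fst (T (x, y'))"
proof (rule Metric_space.continuous_functions_separate_points[OF assms(1)])
  have "T (x, y) \<in> X \<times> Y" "T (x, y') \<in> X \<times> Y"
    using maps assms(4-6) by blast+
  then show "fst (T (x, y)) \<in> X" "fst (T (x, y')) \<in> X"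
    by (simp_all add: mem_Times_iff)
  fix f :: "'a \<Rightarrow> complex"
  assume "continuous_map (Metric_space.mtopology X dX) euclidean f"
  then obtain g where "\<forall>x\<in>X. \<forall>y\<in>Y. f (fst (T (x, y))) = g x"
    using assms(2) unfolding preserves_CX_def by blast
  then show "f (fst (T (x, y))) = f (fst (T (x, y')))"
    using assms(4-6) by simp
qed

text \<open>Each \<open>K x\<close> preserves distances, so it is
  onto; picking \<open>y'\<close> with \<open>K x' y' = K x y\<close> and comparing the distance identities for the
  pairs \<open>(x,y),(x',y')\<close> and \<open>(x,y),(x',y)\<close> gives \<open>dY y y' = 0\<close>.  The point \<open>x0\<close> names
  the common fibre map \<open>K x0\<close>; the point \<open>y0\<close> is needed to see that \<open>h\<close> is onto.\<close>

lemma triangular_isometry_is_product: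
  assumes "Metric_space X dX" "Metric_space Y dY"
    and compact: "compact_space (Metric_space.mtopology Y dY)"
    and T: "isometry_onto (X \<times> Y) (sum_dist dX dY) (X \<times> Y) (sum_dist dX dY) T"
    and tri: "\<And>x y. x \<in> X \<Longrightarrow> y \<in> Y \<Longrightarrow> T (x, y) = (h x, K x y)"
    and x0: "x0 \<in> X" and y0: "y0 \<in> Y"
  shows "isometry_onto X dX X dX h" and "isometry_onto Y dY Y dY (K x0)"
    and "\<forall>x\<in>X. \<forall>y\<in>Y. T (x, y) = (h x, K x0 y)"
proof -
  interpret X: Metric_space X dX by fact
  interpret Y: Metric_space Y dY by fact
  have onto: "T ` (X \<times> Y) = X \<times> Y"
    using T by (simp add: isometry_onto_def)
  have in_X: "h u \<in> X" and in_Y: "K u v \<in> Y" if "u \<in> X" "v \<in> Y" for u v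
  proof -
    have "T (u, v) \<in> X \<times> Y"
      using onto that by blast
    then show "h u \<in> X" "K u v \<in> Y"
      using tri[OF that] by simp_all
  qed
  have dist_eq: "dX (h u) (h u') + dY (K u v) (K u' v') = dX u u' + dY v v'"
    if "u \<in> X" "v \<in> Y" "u' \<in> X" "v' \<in> Y" for u v u' v'
  proof -
    have "sum_dist dX dY (T (u, v)) (T (u', v')) = sum_dist dX dY (u, v) (u', v')"
      using T that unfolding isometry_onto_def by blast
    then show ?thesis
      using tri that by (simp add: sum_dist_def)
  qed
  have K_iso: "dY (K u v) (K u v') = dY v v'" if "u \<in> X" "v \<in> Y" "v' \<in> Y" for u v v'
    using dist_eq[of u v u v'] that in_X by simp
  have K_onto: "K u ` Y = Y" if "u \<in> X" for u
    using Y.isometry_self_map_onto[OF compact, of "K u"] in_Y K_iso that by blast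
  have key: "K x' y = K x y \<and> dX (h x) (h x') = dX x x'"
    if x: "x \<in> X" "x' \<in> X" and y: "y \<in> Y" for x x' y
  proof -
    obtain y' where y': "y' \<in> Y" "K x' y' = K x y"
      using K_onto[OF x(2)] in_Y[OF x(1) y] by (metis imageE)
    have one: "dX (h x) (h x') = dX x x' + dY y y'"
      using dist_eq[OF x(1) y x(2) y'(1)] y' in_Y[OF x(1) y] by simp
    have two: "dX (h x) (h x') + dY (K x y) (K x' y) = dX x x'"
      using dist_eq[OF x(1) y x(2) y] y by simp
    have "dY y y' = 0"
      using one two Y.nonneg[of y y'] Y.nonneg[of "K x y" "K x' y"] by linarith
    then have "y' = y"
      using Y.zero y y'(1) by blast
    then show ?thesis
      using y'(2) one \<open>dY y y' = 0\<close> by simp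
  qed
  show "isometry_onto Y dY Y dY (K x0)"
    unfolding isometry_onto_def using K_onto K_iso x0 by blast
  show "\<forall>x\<in>X. \<forall>y\<in>Y. T (x, y) = (h x, K x0 y)"
  proof (intro ballI)
    fix x y assume "x \<in> X" "y \<in> Y"
    then show "T (x, y) = (h x, K x0 y)"
      using tri key[OF x0] by simp
  qed
  have "X \<subseteq> h ` X"
  proof
    fix a assume "a \<in> X"
    then have "(a, y0) \<in> T ` (X \<times> Y)"
      using onto y0 by simp
    then obtain u v where u: "u \<in> X" and v: "v \<in> Y" and "T (u, v) = (a, y0)"
      by auto
    then have "a = h u"
      using tri[OF u v] by simp
    then show "a \<in> h ` X"
      using u by blast
  qed
  then have "h ` X = X"
    using in_X y0 by blast
  then show "isometry_onto X dX X dX h"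
    unfolding isometry_onto_def using key[OF _ _ y0] by blast
qed

text \<open>The forward direction of the theorem: by \<open>preserves_CX_fst_independent\<close> the isometry
  is triangular.\<close>

lemma preserves_CX_imp_product_isometry:
  assumes "Metric_space X dX" "Metric_space Y dY"
    and compact: "compact_space (Metric_space.mtopology Y dY)"
    and T: "isometry_onto (X \<times> Y) (sum_dist dX dY) (X \<times> Y) (sum_dist dX dY) T"
    and preserves: "preserves_CX X dX Y T"
  shows "\<exists>h k. isometry_onto X dX X dX h \<and> isometry_onto Y dY Y dY k \<and>
           (\<forall>x\<in>X. \<forall>y\<in>Y. T (x, y) = (h x, k y))"
proof (cases "X = {} \<or> Y = {}")
  case True
  then show ?thesis
    by (intro exI[of _ id]) (auto simp: isometry_onto_def)
next
  case False
  then obtain x0 y0 where x0: "x0 \<in> X" and y0: "y0 \<in> Y" by blast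
  have maps: "T ` (X \<times> Y) \<subseteq> X \<times> Y"
    using T by (simp add: isometry_onto_def)
  define h where "h x = fst (T (x, y0))" for x
  define K where "K x y = snd (T (x, y))" for x y
  have "T (x, y) = (h x, K x y)" if "x \<in> X" "y \<in> Y" for x y
    using preserves_CX_fst_independent[OF assms(1) preserves maps that y0]
    unfolding h_def K_def by (simp add: prod_eq_iff)
  from triangular_isometry_is_product[OF assms(1-3) T this x0 y0] show ?thesis
    by blast
qed

lemma product_isometry_preserves_CX:
  assumes "Metric_space X dX" and h: "isometry_onto X dX X dX h"
    and prod: "\<forall>x\<in>X. \<forall>y\<in>Y. T (x, y) = (h x, k y)"
  shows "preserves_CX X dX Y T"
  unfolding preserves_CX_def
proof (intro allI impI)
  fix f :: "'a \<Rightarrow> complex"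
  assume f: "continuous_map (Metric_space.mtopology X dX) euclidean f"
  have "continuous_map (Metric_space.mtopology X dX) (Metric_space.mtopology X dX) h"
    using Metric_space.isometry_continuous_map[OF assms(1)] h
    unfolding isometry_onto_def by blast
  then have "continuous_map (Metric_space.mtopology X dX) euclidean (f \<circ> h)"
    using f continuous_map_compose by blast
  then show "\<exists>g. continuous_map (Metric_space.mtopology X dX) euclidean g \<and>
      (\<forall>x\<in>X. \<forall>y\<in>Y. f (fst (T (x, y))) = g x)"
    using prod by (intro exI[of _ "f \<circ> h"]) auto
qed

theorem lemma3p3:
  fixes X :: "'a set" and dX :: "'a \<Rightarrow> 'a \<Rightarrow> real"
    and Y :: "'b set" and dY :: "'b \<Rightarrow> 'b \<Rightarrow> real"
    and T :: "'a \<times> 'b \<Rightarrow> 'a \<times> 'b"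
  assumes "Metric_space X dX" and "compact_space (Metric_space.mtopology X dX)"
    and "Metric_space Y dY" and "compact_space (Metric_space.mtopology Y dY)"
    and "isometry_onto (X \<times> Y) (sum_dist dX dY) (X \<times> Y) (sum_dist dX dY) T"
  shows "preserves_CX X dX Y T \<longleftrightarrow>
    (\<exists>h k. isometry_onto X dX X dX h \<and> isometry_onto Y dY Y dY k \<and>
       (\<forall>x\<in>X. \<forall>y\<in>Y. T (x, y) = (h x, k y)))"
proof
  show "\<exists>h k. isometry_onto X dX X dX h \<and> isometry_onto Y dY Y dY k \<and>
      (\<forall>x\<in>X. \<forall>y\<in>Y. T (x, y) = (h x, k y))" if "preserves_CX X dX Y T"
    using preserves_CX_imp_product_isometry[OF assms(1,3,4,5) that] .
  show "preserves_CX X dX Y T" if "\<exists>h k. isometry_onto X dX X dX h \<and>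
      isometry_onto Y dY Y dY k \<and> (\<forall>x\<in>X. \<forall>y\<in>Y. T (x, y) = (h x, k y))"
    using that product_isometry_preserves_CX[OF assms(1)] by blast
qed

end
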